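(* Under the standing assumptions, let $\{x_i\}_{i=1}^N$ be a solution of the delayed Hegselmann–Krause system. Then for every $v\in\mathbb{R}^d$, every $T\ge 0$, every $i=1,\dots,N$ and every $t\ge T-\bar\tau$, $$\min_{j=1,\dots,N}\min_{s\in[T-\bar\tau,T]}\langle x_j(s),v\rangle\le\langle x_i(t),v\rangle\le\max_{j=1,\dots,N}\max_{s\in[T-\bar\tau,T]}\langle x_j(s),v\rangle.$$
   Context: Standing assumptions: $N\ge 2$, $d\ge 1$, $\bar\tau>0$; $\tau:[0,\infty)\to[0,\bar\tau]$ continuous; $\psi:\mathbb{R}^d\times\mathbb{R}^d\to\mathbb{R}$ continuous, bounded and strictly positive, $K:=\|\psi\|_\infty$; initial data $x_i^0:[-\bar\tau,0]\to\mathbb{R}^d$ continuous. The delayed Hegselmann–Krause system is $$\frac{d}{dt}x_i(t)=\frac{1}{N-1}\sum_{j\ne i}\psi\big(x_i(t),x_j(t-\tau(t))\big)\big(x_j(t-\tau(t))-x_i(t)\big),\quad t>0,$$ with $x_i=x_i^0$ on $[-\bar\tau,0]$; a solution means continuous $x_i:[-\bar\tau,\infty)\to\mathbb{R}^d$, differentiable on $(0,\infty)$, satisfying this. $\langle\cdot,\cdot\rangle$ is the Euclidean inner product. *)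

theory Defs
  imports "HOL-Analysis.Analysis"
begin

text \<open>Agents are indexed by j < N (i.e. 0..N-1 instead of 1..N); positions live in a
Euclidean space 'a (playing the role of R^d).  x j t is the position of agent j at time t.\<close>

definition delayed_HK_rhs ::
  "nat \<Rightarrow> ('a::euclidean_space \<Rightarrow> 'a \<Rightarrow> real) \<Rightarrow> (real \<Rightarrow> real) \<Rightarrow>
   (nat \<Rightarrow> real \<Rightarrow> 'a) \<Rightarrow> nat \<Rightarrow> real \<Rightarrow> 'a" where
  "delayed_HK_rhs N \<psi> \<tau> x i t =
     (1 / (real N - 1)) *\<^sub>R
       (\<Sum>j\<in>{..<N} - {i}. \<psi> (x i t) (x j (t - \<tau> t)) *\<^sub>R (x j (t - \<tau> t) - x i t))"

definition is_delayed_HK_solution ::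
  "nat \<Rightarrow> real \<Rightarrow> (real \<Rightarrow> real) \<Rightarrow> ('a::euclidean_space \<Rightarrow> 'a \<Rightarrow> real) \<Rightarrow>
   (nat \<Rightarrow> real \<Rightarrow> 'a) \<Rightarrow> (nat \<Rightarrow> real \<Rightarrow> 'a) \<Rightarrow> bool" where
  "is_delayed_HK_solution N taubar \<tau> \<psi> x0 x \<longleftrightarrow>
     (\<forall>i<N. continuous_on {-taubar..} (x i)
        \<and> (\<forall>t\<in>{-taubar..0}. x i t = x0 i t)
        \<and> (\<forall>t>0. (x i has_vector_derivative delayed_HK_rhs N \<psi> \<tau> x i t) (at t)))"

end

theory Submission
  imports Defs
begin

text \<open>Fix a direction v and let M bound all projections x_j(s)\<bullet>v on the initial window
[T - taubar, T]. Suppose some agent first reaches the slightly raised barrier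
M + \<epsilon>(t - T + taubar + 1) at time t*. Choosing i with the largest projection at t*, every
delayed position x_j(t* - \<tau>(t*)) has projection at most that of x_i(t*), so each term of
the right-hand side points backwards along v and the projection of x_i cannot increase at t*;
but the barrier increases strictly, so x_i was above it just before t*, a contradiction.
Letting \<epsilon> \<rightarrow> 0 gives the upper bound; the lower bound is the upper bound for -v.\<close>

lemma first_crossing_time:
  fixes f :: "'i \<Rightarrow> real \<Rightarrow> real" and B :: "real \<Rightarrow> real"
  assumes "finite J"
    and cont: "\<And>j. j \<in> J \<Longrightarrow> continuous_on {a..} (f j)"
    and cont_B: "continuous_on {a..} B"
    and "j \<in> J" "a \<le> t" "B t \<le> f j t"
  obtains t\<^sub>0 j\<^sub>0 where "a \<le> t\<^sub>0" "j\<^sub>0 \<in> J" "B t\<^sub>0 \<le> f j\<^sub>0 t\<^sub>0"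
    "\<And>j s. j \<in> J \<Longrightarrow> a \<le> s \<Longrightarrow> s < t\<^sub>0 \<Longrightarrow> f j s < B s"
proof -
  define S where "S = (\<Union>j\<in>J. {s \<in> {a..}. B s \<le> f j s})"
  have "S \<noteq> {}" using assms(4-6) by (auto simp: S_def)
  moreover have bdd: "bdd_below S" unfolding bdd_below_def S_def by auto
  moreover have "closed S" unfolding S_def
    by (intro closed_UN \<open>finite J\<close> ballI continuous_on_closed_Collect_le cont cont_B closed_atLeast)
  ultimately have "Inf S \<in> S" by (rule closed_contains_Inf)
  moreover have "f j s < B s" if "j \<in> J" "a \<le> s" "s < Inf S" for j s
    using cInf_lower[OF _ bdd, of s] that by (force simp: S_def)
  ultimately show thesis using that by (auto simp: S_def)
qed

lemma running_max_below_rising_barrier: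
  fixes f :: "'i \<Rightarrow> real \<Rightarrow> real"
  assumes "finite J"
    and cont: "\<And>j. j \<in> J \<Longrightarrow> continuous_on {a..} (f j)"
    and "a \<le> T"
    and init: "\<And>j s. j \<in> J \<Longrightarrow> a \<le> s \<Longrightarrow> s \<le> T \<Longrightarrow> f j s \<le> m"
    and deriv: "\<And>i t. i \<in> J \<Longrightarrow> T < t \<Longrightarrow> \<forall>j\<in>J. \<forall>s\<in>{a..t}. f j s \<le> f i t \<Longrightarrow>
                  \<exists>D\<le>0. (f i has_real_derivative D) (at t)"
    and "\<epsilon> > 0" "i \<in> J" "a \<le> t"
  shows "f i t < m + \<epsilon> * (t - a + 1)"
proof (rule ccontr)
  define B where "B s = m + \<epsilon> * (s - a + 1)" for s
  assume "\<not> ?thesis"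
  then have "B t \<le> f i t" by (simp add: B_def)
  have cont_B: "continuous_on {a..} B" unfolding B_def by (intro continuous_intros)
  obtain t\<^sub>0 j\<^sub>0 where t\<^sub>0: "a \<le> t\<^sub>0" "j\<^sub>0 \<in> J" "B t\<^sub>0 \<le> f j\<^sub>0 t\<^sub>0"
    and below: "\<And>j s. j \<in> J \<Longrightarrow> a \<le> s \<Longrightarrow> s < t\<^sub>0 \<Longrightarrow> f j s < B s"
    using first_crossing_time[where f = f, OF \<open>finite J\<close> cont cont_B \<open>i \<in> J\<close> \<open>a \<le> t\<close> \<open>B t \<le> f i t\<close>] by metis
  have B_mono: "B s \<le> B s'" if "s \<le> s'" for s s'
    using that \<open>\<epsilon> > 0\<close> by (simp add: B_def)
  have "T < t\<^sub>0"
  proof (rule ccontr)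
    assume "\<not> T < t\<^sub>0"
    then have "f j\<^sub>0 t\<^sub>0 \<le> m" using init t\<^sub>0 by simp
    moreover have "m < B t\<^sub>0" using t\<^sub>0(1) \<open>\<epsilon> > 0\<close> by (simp add: B_def add_pos_nonneg)
    ultimately show False using t\<^sub>0(3) by linarith
  qed
  have "Max ((\<lambda>j. f j t\<^sub>0) ` J) \<in> (\<lambda>j. f j t\<^sub>0) ` J"
    using \<open>finite J\<close> t\<^sub>0(2) by (intro Max_in) auto
  then obtain k where k: "k \<in> J" "f k t\<^sub>0 = Max ((\<lambda>j. f j t\<^sub>0) ` J)" by auto
  have k_max: "f j t\<^sub>0 \<le> f k t\<^sub>0" if "j \<in> J" for j
    unfolding k(2) using \<open>finite J\<close> that by (intro Max_ge) auto
  have k_crossed: "B t\<^sub>0 \<le> f k t\<^sub>0" using t\<^sub>0(3) k_max[OF t\<^sub>0(2)] by simp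
  have "f j s \<le> f k t\<^sub>0" if "j \<in> J" "s \<in> {a..t\<^sub>0}" for j s
  proof (cases "s < t\<^sub>0")
    case True
    have "f j s < B s" using below that True by simp
    also have "\<dots> \<le> B t\<^sub>0" using True by (rule B_mono[OF less_imp_le])
    also have "\<dots> \<le> f k t\<^sub>0" by (rule k_crossed)
    finally show ?thesis by simp
  next
    case False
    then show ?thesis using that k_max by simp
  qed
  then obtain D where "D \<le> 0" and D: "(f k has_real_derivative D) (at t\<^sub>0)"
    using deriv[OF k(1) \<open>T < t\<^sub>0\<close>] by blast
  have "((\<lambda>s. f k s - B s) has_real_derivative D - \<epsilon>) (at t\<^sub>0)"
    unfolding B_def by (auto intro!: derivative_eq_intros D)
  moreover have "D - \<epsilon> < 0" using \<open>D \<le> 0\<close> \<open>\<epsilon> > 0\<close> by simp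
  ultimately obtain d where "d > 0"
    and dec: "\<And>h. h > 0 \<Longrightarrow> h < d \<Longrightarrow> f k t\<^sub>0 - B t\<^sub>0 < f k (t\<^sub>0 - h) - B (t\<^sub>0 - h)"
    using DERIV_neg_dec_left by blast
  define h where "h = min d (t\<^sub>0 - T) / 2"
  have h: "0 < h" "h < d" "h < t\<^sub>0 - T" using \<open>d > 0\<close> \<open>T < t\<^sub>0\<close> by (auto simp: h_def)
  then have "a \<le> t\<^sub>0 - h" using \<open>a \<le> T\<close> by linarith
  have "f k (t\<^sub>0 - h) < B (t\<^sub>0 - h)" using below[OF k(1) \<open>a \<le> t\<^sub>0 - h\<close>] h(1) by simp
  then show False using dec[OF h(1,2)] k_crossed by linarith
qed

lemma running_max_bound:
  fixes f :: "'i \<Rightarrow> real \<Rightarrow> real"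
  assumes "finite J"
    and cont: "\<And>j. j \<in> J \<Longrightarrow> continuous_on {a..} (f j)"
    and "a \<le> T"
    and init: "\<And>j s. j \<in> J \<Longrightarrow> a \<le> s \<Longrightarrow> s \<le> T \<Longrightarrow> f j s \<le> m"
    and deriv: "\<And>i t. i \<in> J \<Longrightarrow> T < t \<Longrightarrow> \<forall>j\<in>J. \<forall>s\<in>{a..t}. f j s \<le> f i t \<Longrightarrow>
                  \<exists>D\<le>0. (f i has_real_derivative D) (at t)"
    and "i \<in> J" "a \<le> t"
  shows "f i t \<le> m"
proof (rule field_le_epsilon)
  fix e :: real
  assume "e > 0"
  define c where "c = t - a + 1"
  have "c \<ge> 1" using \<open>a \<le> t\<close> by (simp add: c_def)
  then have "e / c > 0" using \<open>e > 0\<close> by simp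
  then have "f i t < m + e / c * (t - a + 1)"
    using running_max_below_rising_barrier[where J = J and f = f and a = a and T = T and m = m]
      assms by blast
  then show "f i t \<le> m + e" using \<open>c \<ge> 1\<close> by (simp add: c_def)
qed

lemma inner_delayed_HK_rhs_nonpos:
  fixes \<psi> :: "'a::euclidean_space \<Rightarrow> 'a \<Rightarrow> real"
  assumes "i < N"
    and psi_nonneg: "\<And>y z. 0 \<le> \<psi> y z"
    and delayed_le: "\<And>j. j < N \<Longrightarrow> x j (t - \<tau> t) \<bullet> v \<le> x i t \<bullet> v"
  shows "delayed_HK_rhs N \<psi> \<tau> x i t \<bullet> v \<le> 0"
proof -
  define s where "s = t - \<tau> t"
  have "delayed_HK_rhs N \<psi> \<tau> x i t \<bullet> v =
      (1 / (real N - 1)) * (\<Sum>j\<in>{..<N} - {i}. \<psi> (x i t) (x j s) * (x j s \<bullet> v - x i t \<bullet> v))"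
    by (simp add: delayed_HK_rhs_def s_def inner_sum_left inner_diff_left)
  also have "\<dots> \<le> 0"
  proof (rule mult_nonneg_nonpos)
    show "0 \<le> 1 / (real N - 1)" using \<open>i < N\<close> by simp
    show "(\<Sum>j\<in>{..<N} - {i}. \<psi> (x i t) (x j s) * (x j s \<bullet> v - x i t \<bullet> v)) \<le> 0"
      using delayed_le psi_nonneg by (intro sum_nonpos mult_nonneg_nonpos) (auto simp: s_def)
  qed
  finally show ?thesis .
qed

lemma delayed_HK_solution_inner_le:
  fixes \<psi> :: "'a::euclidean_space \<Rightarrow> 'a \<Rightarrow> real"
  assumes tau_range: "\<And>t. t \<ge> 0 \<Longrightarrow> 0 \<le> \<tau> t \<and> \<tau> t \<le> taubar"
    and psi_nonneg: "\<And>y z. 0 \<le> \<psi> y z"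
    and sol: "is_delayed_HK_solution N taubar \<tau> \<psi> x0 x"
    and "T \<ge> 0"
    and init: "\<And>j s. j < N \<Longrightarrow> T - taubar \<le> s \<Longrightarrow> s \<le> T \<Longrightarrow> x j s \<bullet> v \<le> m"
    and "i < N" "T - taubar \<le> t"
  shows "x i t \<bullet> v \<le> m"
proof -
  have "taubar \<ge> 0" using tau_range[of 0] by simp
  have "continuous_on {T - taubar..} (\<lambda>s. x j s \<bullet> v)" if "j < N" for j
  proof -
    have "continuous_on {-taubar..} (x j)" using sol that by (simp add: is_delayed_HK_solution_def)
    then have "continuous_on {T - taubar..} (x j)" by (rule continuous_on_subset) (use \<open>T \<ge> 0\<close> in auto)
    then show ?thesis by (intro continuous_intros)
  qed
  moreover have "\<exists>D\<le>0. ((\<lambda>s. x k s \<bullet> v) has_real_derivative D) (at t)"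
    if "k < N" "T < t" and running_max: "\<forall>j\<in>{..<N}. \<forall>s\<in>{T - taubar..t}. x j s \<bullet> v \<le> x k t \<bullet> v"
    for k t
  proof (intro exI conjI)
    have "(x k has_vector_derivative delayed_HK_rhs N \<psi> \<tau> x k t) (at t)"
      using sol that \<open>T \<ge> 0\<close> by (simp add: is_delayed_HK_solution_def)
    then show "((\<lambda>s. x k s \<bullet> v) has_real_derivative delayed_HK_rhs N \<psi> \<tau> x k t \<bullet> v) (at t)"
      unfolding has_real_derivative_iff_has_vector_derivative
      by (rule bounded_linear.has_vector_derivative[OF bounded_linear_inner_left])
    have "T - taubar \<le> t - \<tau> t" "t - \<tau> t \<le> t" using tau_range[of t] \<open>T < t\<close> \<open>T \<ge> 0\<close> by auto
    then show "delayed_HK_rhs N \<psi> \<tau> x k t \<bullet> v \<le> 0"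
      using running_max \<open>k < N\<close> psi_nonneg by (intro inner_delayed_HK_rhs_nonpos) auto
  qed
  ultimately show ?thesis
    using running_max_bound[of "{..<N}" "T - taubar" "\<lambda>j s. x j s \<bullet> v" T m i t] init \<open>i < N\<close> \<open>T - taubar \<le> t\<close> \<open>taubar \<ge> 0\<close>
    by simp
qed

lemma le_SUP_SUP_continuous_on:
  fixes g :: "'i \<Rightarrow> 'b::topological_space \<Rightarrow> real"
  assumes "finite J" "compact K" "\<And>j. j \<in> J \<Longrightarrow> continuous_on K (g j)" "j \<in> J" "s \<in> K"
  shows "g j s \<le> (SUP j\<in>J. SUP s\<in>K. g j s)"
proof -
  have "bdd_above (g j ` K)"
    using assms by (intro bounded_imp_bdd_above compact_imp_bounded compact_continuous_image)
  then have "g j s \<le> (SUP s\<in>K. g j s)" using \<open>s \<in> K\<close> by (rule cSUP_upper[rotated])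
  also have "\<dots> \<le> (SUP j\<in>J. SUP s\<in>K. g j s)" using assms(1,4) by (intro cSUP_upper bdd_above_finite) auto
  finally show ?thesis .
qed

lemma INF_INF_le_continuous_on:
  fixes g :: "'i \<Rightarrow> 'b::topological_space \<Rightarrow> real"
  assumes "finite J" "compact K" "\<And>j. j \<in> J \<Longrightarrow> continuous_on K (g j)" "j \<in> J" "s \<in> K"
  shows "(INF j\<in>J. INF s\<in>K. g j s) \<le> g j s"
proof -
  have "bdd_below (g j ` K)"
    using assms by (intro bounded_imp_bdd_below compact_imp_bounded compact_continuous_image)
  have "(INF j\<in>J. INF s\<in>K. g j s) \<le> (INF s\<in>K. g j s)" using assms(1,4) by (intro cINF_lower bdd_below_finite) auto
  also have "\<dots> \<le> g j s" using \<open>bdd_below (g j ` K)\<close> \<open>s \<in> K\<close> by (intro cINF_lower)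
  finally show ?thesis .
qed

theorem lemma2p1:
  fixes N :: nat and taubar :: real and \<tau> :: "real \<Rightarrow> real"
    and \<psi> :: "'a::euclidean_space \<Rightarrow> 'a \<Rightarrow> real"
    and x0 x :: "nat \<Rightarrow> real \<Rightarrow> 'a"
  assumes N: "N \<ge> 2"
    and taubar: "taubar > 0"
    and tau_cont: "continuous_on {0..} \<tau>"
    and tau_range: "\<And>t. t \<ge> 0 \<Longrightarrow> 0 \<le> \<tau> t \<and> \<tau> t \<le> taubar"
    and psi_cont: "continuous_on UNIV (\<lambda>(y, z). \<psi> y z)"
    and psi_bdd: "bounded (range (\<lambda>(y, z). \<psi> y z))"
    and psi_pos: "\<And>y z. \<psi> y z > 0"
    and x0_cont: "\<And>i. i < N \<Longrightarrow> continuous_on {-taubar..0} (x0 i)"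
    and sol: "is_delayed_HK_solution N taubar \<tau> \<psi> x0 x"
    and T: "T \<ge> 0"
    and i: "i < N"
    and t: "t \<ge> T - taubar"
  shows "(INF j\<in>{..<N}. INF s\<in>{T - taubar..T}. x j s \<bullet> v) \<le> x i t \<bullet> v
       \<and> x i t \<bullet> v \<le> (SUP j\<in>{..<N}. SUP s\<in>{T - taubar..T}. x j s \<bullet> v)"
proof -
  have psi_nonneg: "0 \<le> \<psi> y z" for y z using psi_pos[of y z] by simp
  have cont: "continuous_on {T - taubar..T} (\<lambda>s. x j s \<bullet> w)" if "j < N" for j w
  proof -
    have "continuous_on {-taubar..} (x j)" using sol that by (simp add: is_delayed_HK_solution_def)
    then have "continuous_on {T - taubar..T} (x j)" by (rule continuous_on_subset) (use T in auto)
    then show ?thesis by (intro continuous_intros)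
  qed
  have "x i t \<bullet> v \<le> (SUP j\<in>{..<N}. SUP s\<in>{T - taubar..T}. x j s \<bullet> v)"
    using tau_range psi_nonneg sol T _ i t
  proof (rule delayed_HK_solution_inner_le)
    show "x j s \<bullet> v \<le> (SUP j\<in>{..<N}. SUP s\<in>{T - taubar..T}. x j s \<bullet> v)"
      if "j < N" "T - taubar \<le> s" "s \<le> T" for j s
      using that cont by (intro le_SUP_SUP_continuous_on[where g = "\<lambda>j s. x j s \<bullet> v"]) auto
  qed
  moreover have "x i t \<bullet> - v \<le> - (INF j\<in>{..<N}. INF s\<in>{T - taubar..T}. x j s \<bullet> v)"
    using tau_range psi_nonneg sol T _ i t
  proof (rule delayed_HK_solution_inner_le)
    show "x j s \<bullet> - v \<le> - (INF j\<in>{..<N}. INF s\<in>{T - taubar..T}. x j s \<bullet> v)"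
      if "j < N" "T - taubar \<le> s" "s \<le> T" for j s
    proof -
      have "(INF j\<in>{..<N}. INF s\<in>{T - taubar..T}. x j s \<bullet> v) \<le> x j s \<bullet> v"
        using that cont by (intro INF_INF_le_continuous_on[where g = "\<lambda>j s. x j s \<bullet> v"]) auto
      then show ?thesis by simp
    qed
  qed
  ultimately show ?thesis by simp
qed

end
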